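(* Let $L$ be a finite-dimensional Lie algebra over a field $F$. Then $L$ is solvable if and only if every maximal subalgebra of $L$ has an abelian ideal completion.
   Context: For a nonzero subalgebra $X$ of $L$, the strict core $k(X)$ is the sum of all ideals of $L$ that are proper subalgebras of $X$ (it is $0$ if there are none). For a maximal subalgebra $M$ of $L$, a subalgebra $C$ is a completion of $M$ if $C\not\subseteq M$ but every proper subalgebra of $C$ that is an ideal of $L$ is contained in $M$; an ideal completion is a completion that is an ideal of $L$. $M$ has an abelian ideal completion if it has an ideal completion $C$ such that the Lie algebra $C/k(C)$ is abelian. *)

theory Defs
  imports Complex_Main
begin

text \<open>A Lie algebra L over a field F is modelled as the whole type 'b (an additive group)
  with a scalar multiplication scl :: 'a \<Rightarrow> 'b \<Rightarrow> 'b ('a a field) and a bracket br.\<close>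

definition lie_algebra :: "('a::field \<Rightarrow> 'b::ab_group_add \<Rightarrow> 'b) \<Rightarrow> ('b \<Rightarrow> 'b \<Rightarrow> 'b) \<Rightarrow> bool" where
  "lie_algebra scl br \<longleftrightarrow>
     vector_space scl \<and>
     (\<forall>x. Vector_Spaces.linear scl scl (br x)) \<and>
     (\<forall>y. Vector_Spaces.linear scl scl (\<lambda>x. br x y)) \<and>
     (\<forall>x. br x x = 0) \<and>
     (\<forall>x y z. br x (br y z) + br y (br z x) + br z (br x y) = 0)"

definition finite_dim_lie :: "('a::field \<Rightarrow> 'b::ab_group_add \<Rightarrow> 'b) \<Rightarrow> bool" where
  "finite_dim_lie scl \<longleftrightarrow> (\<exists>B. finite B \<and> module.span scl B = UNIV)"

definition lie_subalgebra :: "('a::field \<Rightarrow> 'b::ab_group_add \<Rightarrow> 'b) \<Rightarrow> ('b \<Rightarrow> 'b \<Rightarrow> 'b) \<Rightarrow> 'b set \<Rightarrow> bool" where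
  "lie_subalgebra scl br S \<longleftrightarrow> module.subspace scl S \<and> (\<forall>x\<in>S. \<forall>y\<in>S. br x y \<in> S)"

definition lie_ideal :: "('a::field \<Rightarrow> 'b::ab_group_add \<Rightarrow> 'b) \<Rightarrow> ('b \<Rightarrow> 'b \<Rightarrow> 'b) \<Rightarrow> 'b set \<Rightarrow> bool" where
  "lie_ideal scl br I \<longleftrightarrow> module.subspace scl I \<and> (\<forall>x. \<forall>y\<in>I. br x y \<in> I)"

definition maximal_subalgebra :: "('a::field \<Rightarrow> 'b::ab_group_add \<Rightarrow> 'b) \<Rightarrow> ('b \<Rightarrow> 'b \<Rightarrow> 'b) \<Rightarrow> 'b set \<Rightarrow> bool" where
  "maximal_subalgebra scl br M \<longleftrightarrow> lie_subalgebra scl br M \<and> M \<noteq> UNIV \<and>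
     (\<forall>S. lie_subalgebra scl br S \<and> M \<subseteq> S \<longrightarrow> S = M \<or> S = UNIV)"

text \<open>Strict core: sum (= span of the union) of all ideals of L that are proper subalgebras of X;
  it is {0} if there are none.\<close>
definition strict_core :: "('a::field \<Rightarrow> 'b::ab_group_add \<Rightarrow> 'b) \<Rightarrow> ('b \<Rightarrow> 'b \<Rightarrow> 'b) \<Rightarrow> 'b set \<Rightarrow> 'b set" where
  "strict_core scl br X = module.span scl (\<Union>{I. lie_ideal scl br I \<and> lie_subalgebra scl br I \<and> I \<subset> X})"

definition completion :: "('a::field \<Rightarrow> 'b::ab_group_add \<Rightarrow> 'b) \<Rightarrow> ('b \<Rightarrow> 'b \<Rightarrow> 'b) \<Rightarrow> 'b set \<Rightarrow> 'b set \<Rightarrow> bool" where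
  "completion scl br M C \<longleftrightarrow> lie_subalgebra scl br C \<and> \<not> C \<subseteq> M \<and>
     (\<forall>I. lie_subalgebra scl br I \<and> I \<subset> C \<and> lie_ideal scl br I \<longrightarrow> I \<subseteq> M)"

definition ideal_completion :: "('a::field \<Rightarrow> 'b::ab_group_add \<Rightarrow> 'b) \<Rightarrow> ('b \<Rightarrow> 'b \<Rightarrow> 'b) \<Rightarrow> 'b set \<Rightarrow> 'b set \<Rightarrow> bool" where
  "ideal_completion scl br M C \<longleftrightarrow> completion scl br M C \<and> lie_ideal scl br C"

text \<open>C / k(C) is abelian iff [C,C] \<subseteq> k(C) (k(C) is an ideal of L contained in C).\<close>
definition abelian_mod :: "('b \<Rightarrow> 'b \<Rightarrow> 'b) \<Rightarrow> 'b set \<Rightarrow> 'b set \<Rightarrow> bool" where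
  "abelian_mod br C K \<longleftrightarrow> (\<forall>x\<in>C. \<forall>y\<in>C. br x y \<in> K)"

definition has_abelian_ideal_completion :: "('a::field \<Rightarrow> 'b::ab_group_add \<Rightarrow> 'b) \<Rightarrow> ('b \<Rightarrow> 'b \<Rightarrow> 'b) \<Rightarrow> 'b set \<Rightarrow> bool" where
  "has_abelian_ideal_completion scl br M \<longleftrightarrow>
     (\<exists>C. ideal_completion scl br M C \<and> abelian_mod br C (strict_core scl br C))"

primrec derived_series :: "('a::field \<Rightarrow> 'b::ab_group_add \<Rightarrow> 'b) \<Rightarrow> ('b \<Rightarrow> 'b \<Rightarrow> 'b) \<Rightarrow> nat \<Rightarrow> 'b set" where
  "derived_series scl br 0 = UNIV"
| "derived_series scl br (Suc n) =
     module.span scl {br x y | x y. x \<in> derived_series scl br n \<and> y \<in> derived_series scl br n}"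

definition lie_solvable :: "('a::field \<Rightarrow> 'b::ab_group_add \<Rightarrow> 'b) \<Rightarrow> ('b \<Rightarrow> 'b \<Rightarrow> 'b) \<Rightarrow> bool" where
  "lie_solvable scl br \<longleftrightarrow> (\<exists>n. derived_series scl br n = {0})"

end

theory Submission
  imports Defs
begin

text \<open>
  If \<open>L\<close> is solvable and \<open>M\<close> is maximal, an ideal \<open>C\<close> of least dimension not contained in
  \<open>M\<close> is an ideal completion of \<open>M\<close>; solvability makes \<open>[C,C]\<close> a proper subideal of \<open>C\<close>,
  so \<open>[C,C] \<subseteq> k(C)\<close>.

  Conversely, if \<open>L\<close> is not solvable, take a solvable ideal \<open>N\<close> of maximal dimension and an
  ideal \<open>A\<close> minimal above it: \<open>A/N\<close> is a non-abelian chief factor, with centraliser \<open>Z\<close>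
  satisfying \<open>Z \<inter> A = N\<close>. An abelian ideal completion \<open>C\<close> of a maximal subalgebra
  \<open>M \<supseteq> Z\<close> has \<open>[C,C] \<subseteq> k(C) \<subseteq> M\<close>, and comparing \<open>C + N\<close> with the chief factor
  forces \<open>A \<subseteq> M\<close>. For \<open>x \<in> A\<close> the Fitting decomposition \<open>L = L\<^sub>0(ad x) + (ad x)\<^sup>n L\<close>
  has \<open>(ad x)\<^sup>n L \<subseteq> A\<close>, so the subalgebra \<open>L\<^sub>0(ad x) + Z\<close> supplements \<open>A\<close> and lies in no
  maximal subalgebra, i.e. it is \<open>L\<close>; hence \<open>ad x\<close> is nilpotent modulo \<open>N\<close>. Engel's theorem
  then gives \<open>v \<in> A - N\<close> with \<open>[A,v] \<subseteq> N\<close>, i.e. \<open>v \<in> Z \<inter> A = N\<close>, a contradiction.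
\<close>

definition derived_algebra ::
    "('a::field \<Rightarrow> 'b::ab_group_add \<Rightarrow> 'b) \<Rightarrow> ('b \<Rightarrow> 'b \<Rightarrow> 'b) \<Rightarrow> 'b set \<Rightarrow> 'b set" where
  "derived_algebra scl br S = module.span scl {br x y | x y. x \<in> S \<and> y \<in> S}"

primrec derived_series_of ::
    "('a::field \<Rightarrow> 'b::ab_group_add \<Rightarrow> 'b) \<Rightarrow> ('b \<Rightarrow> 'b \<Rightarrow> 'b) \<Rightarrow> 'b set \<Rightarrow> nat \<Rightarrow> 'b set" where
  "derived_series_of scl br S 0 = S"
| "derived_series_of scl br S (Suc n) = derived_algebra scl br (derived_series_of scl br S n)"

definition lie_solvable_on ::
    "('a::field \<Rightarrow> 'b::ab_group_add \<Rightarrow> 'b) \<Rightarrow> ('b \<Rightarrow> 'b \<Rightarrow> 'b) \<Rightarrow> 'b set \<Rightarrow> bool" where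
  "lie_solvable_on scl br S \<longleftrightarrow> (\<exists>n. derived_series_of scl br S n = {0})"

lemma funpow_exit_step:
  assumes "\<forall>u\<in>V. f u \<in> V" and "u \<in> V" and "u \<notin> W" and "(f ^^ m) u \<in> W"
  shows "\<exists>u'\<in>V. u' \<notin> W \<and> f u' \<in> W"
  using assms(2-)
proof (induction m arbitrary: u)
  case (Suc m)
  show ?case
  proof (cases "f u \<in> W")
    case False
    have "(f ^^ m) (f u) \<in> W"
      using Suc.prems(3) by (simp add: funpow_Suc_right del: funpow.simps)
    then show ?thesis using Suc.IH[of "f u"] assms(1) Suc.prems(1) False by blast
  qed (use Suc.prems in blast)
qed simp

lemma (in vector_space) linear_funpow:
  assumes "Vector_Spaces.linear scale scale f"
  shows "Vector_Spaces.linear scale scale (f ^^ n)"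
proof (induction n)
  case (Suc n)
  show ?case
    using Vector_Spaces.linear_compose[OF Suc assms] by (simp add: comp_def)
qed (simp add: linear_id[unfolded id_def])

lemma (in finite_dimensional_vector_space) fitting_decomposition:
  assumes f: "Vector_Spaces.linear scale scale f"
  shows "\<exists>n>0. \<forall>y. \<exists>w. (f ^^ n) (y - (f ^^ n) w) = 0"
proof -
  define R where "R k = range (f ^^ k)" for k
  have hom: "Vector_Spaces.linear scale scale (f ^^ k)" for k
    using linear_funpow[OF f] .
  have subspace_R: "subspace (R k)" for k
    unfolding R_def using module_hom.subspace_image[OF module_hom_linearI[OF hom] subspace_UNIV] .
  have R_Suc: "R (Suc k) = f ` R k" for k
    unfolding R_def by (simp add: image_comp)
  have R_Suc_subset: "R (Suc k) \<subseteq> R k" for k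
    unfolding R_def by (auto simp: funpow_Suc_right simp del: funpow.simps)
  obtain k where k: "\<forall>j. dim (R k) \<le> dim (R j)"
    using ex_has_least_nat[of "\<lambda>_. True" 0 "\<lambda>j. dim (R j)"] by blast
  have "R (Suc k) = R k"
    using subspace_dim_equal[OF subspace_R subspace_R R_Suc_subset] k by blast
  then have R_stable: "R (k + j) = R k" for j
    by (induction j) (simp_all add: R_Suc)
  show ?thesis
  proof (intro exI[of _ "Suc k"] conjI allI)
    fix y
    have "(f ^^ Suc k) y \<in> R (Suc k + Suc k)"
      using R_stable[of 1] R_stable[of "Suc (Suc k)"] unfolding R_def by auto
    then obtain w where "(f ^^ Suc k) y = (f ^^ (Suc k + Suc k)) w"
      unfolding R_def by blast
    then have "(f ^^ Suc k) y = (f ^^ Suc k) ((f ^^ Suc k) w)"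
      by (simp only: funpow_add comp_apply)
    then show "\<exists>w. (f ^^ Suc k) (y - (f ^^ Suc k) w) = 0"
      by (intro exI[of _ w]) (simp add: module_hom.diff[OF module_hom_linearI[OF hom]] del: funpow.simps)
  qed simp
qed

locale lie_alg =
  fixes scl :: "'a::field \<Rightarrow> 'b::ab_group_add \<Rightarrow> 'b" and br :: "'b \<Rightarrow> 'b \<Rightarrow> 'b"
  assumes lie_algebra: "lie_algebra scl br"
begin

sublocale vector_space scl
  using lie_algebra unfolding lie_algebra_def by blast

abbreviation "ideal \<equiv> lie_ideal scl br"
abbreviation "subalg \<equiv> lie_subalgebra scl br"

lemma linear_bracket_right: "Vector_Spaces.linear scl scl (br x)"
  using lie_algebra unfolding lie_algebra_def by blast

lemma linear_bracket_left: "Vector_Spaces.linear scl scl (\<lambda>x. br x y)"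
  using lie_algebra unfolding lie_algebra_def by blast

lemma bracket_self [simp]: "br x x = 0"
  using lie_algebra unfolding lie_algebra_def by blast

lemma jacobi: "br x (br y z) + br y (br z x) + br z (br x y) = 0"
  using lie_algebra unfolding lie_algebra_def by blast

lemmas bracket_hom_right = module_hom_linearI[OF linear_bracket_right]
lemmas bracket_hom_left = module_hom_linearI[OF linear_bracket_left]

lemma bracket_add_right [simp]: "br x (y + z) = br x y + br x z"
  using module_hom.add[OF bracket_hom_right] .
lemma bracket_add_left [simp]: "br (x + y) z = br x z + br y z"
  using module_hom.add[OF bracket_hom_left] .
lemma bracket_scale_right [simp]: "br x (scl c y) = scl c (br x y)"
  using module_hom.scale[OF bracket_hom_right] .
lemma bracket_scale_left [simp]: "br (scl c x) y = scl c (br x y)"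
  using module_hom.scale[OF bracket_hom_left, of c x y] by simp
lemma bracket_zero_right [simp]: "br x 0 = 0"
  using module_hom.zero[OF bracket_hom_right] .
lemma bracket_zero_left [simp]: "br 0 y = 0"
  using module_hom.zero[OF bracket_hom_left, of y] by simp
lemma bracket_minus_right [simp]: "br x (- y) = - br x y"
  using module_hom.neg[OF bracket_hom_right] .
lemma bracket_diff_left [simp]: "br (x - y) z = br x z - br y z"
  using module_hom.diff[OF bracket_hom_left] by simp

lemma bracket_antisym: "br x y = - br y x"
proof -
  have "br (x + y) (x + y) = br x x + br x y + (br y x + br y y)"
    by (simp only: bracket_add_left bracket_add_right add_ac)
  then show ?thesis
    by (simp add: eq_neg_iff_add_eq_0 add.commute)
qed

lemma bracket_leibniz: "br x (br a b) = br (br x a) b + br a (br x b)"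
  using jacobi[of x a b] bracket_antisym[of b x] bracket_antisym[of b "br x a"]
  by (simp add: algebra_simps eq_neg_iff_add_eq_0)

lemma lie_ideal_subspace: "ideal I \<Longrightarrow> subspace I"
  unfolding lie_ideal_def by blast

lemma lie_ideal_bracket_right: "ideal I \<Longrightarrow> y \<in> I \<Longrightarrow> br x y \<in> I"
  unfolding lie_ideal_def by blast

lemma lie_ideal_bracket_left: "ideal I \<Longrightarrow> x \<in> I \<Longrightarrow> br x y \<in> I"
  using lie_ideal_bracket_right[of I x y] bracket_antisym[of x y]
    subspace_neg[OF lie_ideal_subspace, of I "br y x"] by simp

lemma lie_ideal_imp_subalgebra: "ideal I \<Longrightarrow> subalg I"
  unfolding lie_ideal_def lie_subalgebra_def by blast

lemma lie_subalgebra_subspace: "subalg S \<Longrightarrow> subspace S"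
  unfolding lie_subalgebra_def by blast

lemma lie_subalgebra_bracket: "subalg S \<Longrightarrow> x \<in> S \<Longrightarrow> y \<in> S \<Longrightarrow> br x y \<in> S"
  unfolding lie_subalgebra_def by blast

lemma lie_ideal_zero: "ideal {0}"
  unfolding lie_ideal_def by simp

lemma lie_ideal_UNIV: "ideal UNIV"
  unfolding lie_ideal_def by simp

lemma lie_ideal_Int: "ideal I \<Longrightarrow> ideal J \<Longrightarrow> ideal (I \<inter> J)"
  unfolding lie_ideal_def using subspace_inter by blast

lemma bracket_span_mem:
  assumes "subspace U" and "\<forall>x\<in>S. \<forall>y\<in>T. br x y \<in> U" and "x \<in> span S" and "y \<in> span T"
  shows "br x y \<in> U"
proof -
  have generator: "br x y \<in> U" if "x \<in> S" for x
    using assms(4)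
    by (induction rule: span_induct_alt) (use assms(1,2) that in \<open>simp_all add: subspace_0 subspace_add subspace_scale\<close>)
  show ?thesis
    using assms(3)
    by (induction rule: span_induct_alt) (use assms(1) generator in \<open>simp_all add: subspace_0 subspace_add subspace_scale\<close>)
qed

lemma lie_subalgebra_span:
  assumes "\<forall>x\<in>G. \<forall>y\<in>G. br x y \<in> span G"
  shows "subalg (span G)"
  unfolding lie_subalgebra_def using bracket_span_mem[OF subspace_span assms] by simp

lemma lie_ideal_span:
  assumes "\<forall>l. \<forall>g\<in>G. br l g \<in> span G"
  shows "ideal (span G)"
  unfolding lie_ideal_def using bracket_span_mem[OF subspace_span, of UNIV G] assms by auto

lemma lie_subalgebra_add_ideal:
  assumes "subalg S" and "ideal I"
  shows "subalg (span (S \<union> I))"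
proof (rule lie_subalgebra_span, intro ballI)
  fix x y assume "x \<in> S \<union> I" "y \<in> S \<union> I"
  then have "br x y \<in> S \<union> I"
    by (elim UnE) (auto intro: lie_subalgebra_bracket[OF assms(1)]
        lie_ideal_bracket_left[OF assms(2)] lie_ideal_bracket_right[OF assms(2)])
  then show "br x y \<in> span (S \<union> I)"
    by (rule span_base)
qed

lemma lie_subalgebra_insert:
  assumes "subalg H" and "\<forall>h\<in>H. br h v \<in> H"
  shows "subalg (span (insert v H))"
proof (rule lie_subalgebra_span, intro ballI)
  have normalizes: "br v h \<in> H" if "h \<in> H" for h
  proof -
    have "- br h v \<in> H"
      using assms(2) that subspace_neg[OF lie_subalgebra_subspace[OF assms(1)]] by blast
    then show ?thesis
      by (subst bracket_antisym)
  qed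
  fix x y assume "x \<in> insert v H" "y \<in> insert v H"
  then have "br x y \<in> insert 0 H"
    using normalizes assms(2) lie_subalgebra_bracket[OF assms(1), of x y] by auto
  then show "br x y \<in> span (insert v H)"
    using span_zero[of "insert v H"] span_base[of "br x y" "insert v H"] by auto
qed

lemma derived_algebra_lie_ideal:
  assumes "ideal C"
  shows "ideal (derived_algebra scl br C)"
  unfolding derived_algebra_def
proof (rule lie_ideal_span, intro allI ballI)
  fix l g assume "g \<in> {br x y | x y. x \<in> C \<and> y \<in> C}"
  then obtain x y where g: "g = br x y" "x \<in> C" "y \<in> C" by blast
  then have "br (br l x) y \<in> span {br x y | x y. x \<in> C \<and> y \<in> C}"
    and "br x (br l y) \<in> span {br x y | x y. x \<in> C \<and> y \<in> C}"
    using assms lie_ideal_bracket_right by (blast intro: span_base)+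
  then show "br l g \<in> span {br x y | x y. x \<in> C \<and> y \<in> C}"
    unfolding g(1) bracket_leibniz[of l x y] by (rule span_add)
qed

lemma derived_algebra_subset: "subalg S \<Longrightarrow> derived_algebra scl br S \<subseteq> S"
  unfolding derived_algebra_def
  by (rule span_minimal) (auto intro: lie_subalgebra_bracket lie_subalgebra_subspace)

lemma bracket_mem_derived_algebra: "x \<in> S \<Longrightarrow> y \<in> S \<Longrightarrow> br x y \<in> derived_algebra scl br S"
  unfolding derived_algebra_def by (blast intro: span_base)

lemma derived_series_of_mono: "S \<subseteq> T \<Longrightarrow> derived_series_of scl br S k \<subseteq> derived_series_of scl br T k"
  by (induction k) (auto simp: derived_algebra_def intro!: span_mono)

lemma derived_series_of_Suc_shift:
  "derived_series_of scl br S (Suc k) = derived_series_of scl br (derived_algebra scl br S) k"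
  by (induction k) simp_all

lemma derived_series_eq: "derived_series scl br k = derived_series_of scl br UNIV k"
  by (induction k) (simp_all add: derived_algebra_def)

lemma lie_solvable_on_extension:
  assumes "lie_solvable_on scl br N" and "derived_algebra scl br A \<subseteq> N"
  shows "lie_solvable_on scl br A"
proof -
  obtain k where k: "derived_series_of scl br N k = {0}"
    using assms(1) unfolding lie_solvable_on_def by blast
  have "derived_series_of scl br A (Suc k) \<subseteq> {0}"
    using derived_series_of_mono[OF assms(2), of k] k by (simp only: derived_series_of_Suc_shift)
  moreover have "0 \<in> derived_series_of scl br A (Suc k)"
    by (simp add: derived_algebra_def span_zero)
  ultimately show ?thesis
    unfolding lie_solvable_on_def by blast
qed

lemma ad_power_hom: "module_hom scl scl (br x ^^ m)"
  using module_hom_linearI[OF linear_funpow[OF linear_bracket_right]] .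

lemma ad_power_add [simp]: "(br x ^^ m) (a + b) = (br x ^^ m) a + (br x ^^ m) b"
  using module_hom.add[OF ad_power_hom] .
lemma ad_power_scale [simp]: "(br x ^^ m) (scl c a) = scl c ((br x ^^ m) a)"
  using module_hom.scale[OF ad_power_hom] .
lemma ad_power_zero [simp]: "(br x ^^ m) 0 = 0"
  using module_hom.zero[OF ad_power_hom] .

lemma ad_power_bracket_eq_0:
  "(br x ^^ p) a = 0 \<Longrightarrow> (br x ^^ q) b = 0 \<Longrightarrow> (br x ^^ (p + q)) (br a b) = 0"
proof (induction "p + q" arbitrary: p q a b rule: less_induct)
  case less
  show ?case
  proof (cases p)
    case (Suc p')
    show ?thesis
    proof (cases q)
      case (Suc q')
      have "(br x ^^ (p' + q)) (br (br x a) b) = 0"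
        using less.hyps[of p' q "br x a" b] less.prems \<open>p = Suc p'\<close>
        by (simp add: funpow_Suc_right del: funpow.simps)
      moreover have "(br x ^^ (p' + q)) (br a (br x b)) = 0"
        using less.hyps[of p q' a "br x b"] less.prems \<open>p = Suc p'\<close> \<open>q = Suc q'\<close>
        by (simp add: funpow_Suc_right del: funpow.simps)
      moreover have "(br x ^^ (p + q)) (br a b) = (br x ^^ (p' + q)) (br x (br a b))"
        using \<open>p = Suc p'\<close> by (simp add: funpow_Suc_right del: funpow.simps)
      ultimately show ?thesis
        by (simp only: bracket_leibniz[of x a b] ad_power_add) simp
    qed (use less.prems in simp)
  qed (use less.prems in simp)
qed

lemma lie_subalgebra_generalized_null_space: "subalg {k. \<exists>m. (br x ^^ m) k = 0}"
  unfolding lie_subalgebra_def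
proof (intro conjI ballI)
  show "subspace {k. \<exists>m. (br x ^^ m) k = 0}"
  proof (rule subspaceI)
    show "0 \<in> {k. \<exists>m. (br x ^^ m) k = 0}" by simp
  next
    fix a b assume "a \<in> {k. \<exists>m. (br x ^^ m) k = 0}" "b \<in> {k. \<exists>m. (br x ^^ m) k = 0}"
    then obtain p q where "(br x ^^ p) a = 0" "(br x ^^ q) b = 0" by blast
    then have "(br x ^^ (q + p)) a = 0" "(br x ^^ (p + q)) b = 0"
      by (simp_all add: funpow_add)
    then show "a + b \<in> {k. \<exists>m. (br x ^^ m) k = 0}"
      by (auto simp: add.commute intro: exI[of _ "p + q"])
  next
    fix c a assume "a \<in> {k. \<exists>m. (br x ^^ m) k = 0}"
    then show "scl c a \<in> {k. \<exists>m. (br x ^^ m) k = 0}" by auto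
  qed
next
  fix a b assume "a \<in> {k. \<exists>m. (br x ^^ m) k = 0}" "b \<in> {k. \<exists>m. (br x ^^ m) k = 0}"
  then show "br a b \<in> {k. \<exists>m. (br x ^^ m) k = 0}"
    using ad_power_bracket_eq_0 by blast
qed

lemma annihilator_invariant:
  assumes "subspace W" and "\<forall>w\<in>W. br v w \<in> W" and "\<forall>h\<in>H. br h v \<in> H"
    and "\<forall>h\<in>H. br h u \<in> W"
  shows "\<forall>h\<in>H. br h (br v u) \<in> W"
proof
  fix h assume h: "h \<in> H"
  have "br (br h v) u \<in> W" "br v (br h u) \<in> W"
    using assms(2-4) h by blast+
  then show "br h (br v u) \<in> W"
    unfolding bracket_leibniz[of h v u] by (rule subspace_add[OF assms(1)])
qed

lemma exists_annihilated_by_insert: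
  assumes "subspace W" and "\<forall>u\<in>V. br v u \<in> V" and "\<forall>w\<in>W. br v w \<in> W"
    and "\<forall>h\<in>H. br h v \<in> H"
    and "v0 \<in> V" and "v0 \<notin> W" and "\<forall>h\<in>H. br h v0 \<in> W" and "(br v ^^ m) v0 \<in> W"
  obtains u where "u \<in> V" and "u \<notin> W" and "\<forall>k\<in>insert v H. br k u \<in> W"
proof -
  define V0 where "V0 = {u\<in>V. \<forall>h\<in>H. br h u \<in> W}"
  have "\<forall>u\<in>V0. br v u \<in> V0"
    unfolding V0_def using annihilator_invariant[OF assms(1,3,4)] assms(2) by blast
  then obtain u where "u \<in> V0" "u \<notin> W" "br v u \<in> W"
    using funpow_exit_step[of V0 "br v" v0 W m] assms(5-8) unfolding V0_def by blast
  then show thesis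
    using that unfolding V0_def by blast
qed

lemma ad_power_mem_ideal: "ideal I \<Longrightarrow> z \<in> I \<Longrightarrow> (br x ^^ m) z \<in> I"
  by (induction m) (simp_all add: lie_ideal_bracket_right)

lemma strict_core_subset:
  assumes "completion scl br M C" and "subspace M"
  shows "strict_core scl br C \<subseteq> M"
  unfolding strict_core_def
  using assms unfolding completion_def by (intro span_minimal) blast+

lemma abelian_ideal_completion_brackets:
  assumes "subspace M" and "has_abelian_ideal_completion scl br M"
  obtains C where "ideal C" and "\<not> C \<subseteq> M" and "\<forall>x\<in>C. \<forall>y\<in>C. br x y \<in> M"
proof -
  obtain C where C: "ideal_completion scl br M C" "abelian_mod br C (strict_core scl br C)"
    using assms(2) unfolding has_abelian_ideal_completion_def by blast
  then have completion: "completion scl br M C" and "ideal C"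
    unfolding ideal_completion_def by blast+
  have "strict_core scl br C \<subseteq> M"
    using strict_core_subset[OF completion assms(1)] .
  then have "\<forall>x\<in>C. \<forall>y\<in>C. br x y \<in> M"
    using C(2) unfolding abelian_mod_def by blast
  moreover have "\<not> C \<subseteq> M"
    using completion unfolding completion_def by blast
  ultimately show thesis
    using that \<open>ideal C\<close> by blast
qed

end

locale fd_lie_alg = lie_alg scl br + finite_dimensional_vector_space scl Basis
  for scl :: "'a::field \<Rightarrow> 'b::ab_group_add \<Rightarrow> 'b" and br and Basis
begin

lemma ex_dim_maximal: "P S0 \<Longrightarrow> \<exists>S. P S \<and> (\<forall>T. P T \<longrightarrow> dim T \<le> dim S)"
  using ex_has_greatest_nat[of P S0 dim "Suc dimension"] dim_subset_UNIV le_imp_less_Suc by blast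

lemma dim_strict_mono: "subspace S \<Longrightarrow> subspace T \<Longrightarrow> S \<subset> T \<Longrightarrow> dim S < dim T"
  using dim_psubset[of S T] span_eq_iff by metis

lemma exists_maximal_subalgebra_between:
  assumes "subalg S" and "S \<subset> K"
  shows "\<exists>H. subalg H \<and> S \<subseteq> H \<and> H \<subset> K \<and> (\<forall>T. subalg T \<and> H \<subset> T \<and> T \<subseteq> K \<longrightarrow> T = K)"
proof -
  obtain H where H: "subalg H" "S \<subseteq> H" "H \<subset> K"
    and greatest: "\<forall>T. subalg T \<and> S \<subseteq> T \<and> T \<subset> K \<longrightarrow> dim T \<le> dim H"
    using ex_dim_maximal[of "\<lambda>T. subalg T \<and> S \<subseteq> T \<and> T \<subset> K" S] assms by blast
  have "T = K" if T: "subalg T" "H \<subset> T" "T \<subseteq> K" for T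
  proof (rule ccontr)
    assume "T \<noteq> K"
    then have "subalg T \<and> S \<subseteq> T \<and> T \<subset> K"
      using T H(2) by blast
    then have "dim T \<le> dim H"
      using greatest by blast
    moreover have "dim H < dim T"
      using dim_strict_mono[OF lie_subalgebra_subspace[OF H(1)] lie_subalgebra_subspace[OF T(1)] T(2)] .
    ultimately show False by simp
  qed
  then show ?thesis
    using H by (intro exI[of _ H]) blast
qed

lemma exists_maximal_subalgebra:
  assumes "subalg S" and "S \<noteq> UNIV"
  shows "\<exists>M. maximal_subalgebra scl br M \<and> S \<subseteq> M"
proof -
  have "S \<subset> UNIV"
    using assms(2) by blast
  then obtain M where M: "subalg M" "S \<subseteq> M" "M \<subset> UNIV"
    and maximal: "\<forall>T. subalg T \<and> M \<subset> T \<and> T \<subseteq> UNIV \<longrightarrow> T = UNIV"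
    using exists_maximal_subalgebra_between[OF assms(1) \<open>S \<subset> UNIV\<close>] by auto
  have "maximal_subalgebra scl br M"
    unfolding maximal_subalgebra_def
  proof (intro conjI allI impI M(1))
    show "M \<noteq> UNIV"
      using M(3) by blast
    fix T assume "subalg T \<and> M \<subseteq> T"
    then show "T = M \<or> T = UNIV"
      using maximal by (cases "T = M") auto
  qed
  then show ?thesis
    using M(2) by blast
qed

lemma minimal_ideal_outside_is_completion:
  assumes "ideal C" and "\<not> C \<subseteq> M"
    and least: "\<forall>T. ideal T \<and> \<not> T \<subseteq> M \<longrightarrow> dim C \<le> dim T"
  shows "ideal_completion scl br M C"
  unfolding ideal_completion_def completion_def
proof (intro conjI allI impI assms(1,2) lie_ideal_imp_subalgebra)
  fix I assume I: "subalg I \<and> I \<subset> C \<and> ideal I"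
  then have "dim I < dim C"
    using dim_strict_mono lie_ideal_subspace assms(1) by blast
  then show "I \<subseteq> M"
    using least I by (meson not_le)
qed

lemma solvable_imp_abelian_ideal_completion:
  assumes "lie_solvable scl br" and "maximal_subalgebra scl br M"
  shows "has_abelian_ideal_completion scl br M"
proof -
  have M: "subalg M" "M \<noteq> UNIV"
    using assms(2) unfolding maximal_subalgebra_def by auto
  obtain C where C: "ideal C" "\<not> C \<subseteq> M"
    and least: "\<forall>T. ideal T \<and> \<not> T \<subseteq> M \<longrightarrow> dim C \<le> dim T"
    using ex_has_least_nat[of "\<lambda>T. ideal T \<and> \<not> T \<subseteq> M" UNIV dim] lie_ideal_UNIV M by blast
  have completion: "ideal_completion scl br M C"
    using minimal_ideal_outside_is_completion[OF C least] .
  have derived_ne: "derived_algebra scl br C \<noteq> C"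
  proof
    assume perfect: "derived_algebra scl br C = C"
    obtain n where "derived_series scl br n = {0}"
      using assms(1) unfolding lie_solvable_def by blast
    moreover have "derived_series_of scl br C k = C" for k
      by (induction k) (simp_all add: perfect)
    ultimately have "C \<subseteq> {0}"
      using derived_series_of_mono[of C UNIV n] by (simp add: derived_series_eq)
    then show False
      using C(2) M(1) lie_subalgebra_subspace subspace_0 by blast
  qed
  have "derived_algebra scl br C \<subseteq> strict_core scl br C"
    unfolding strict_core_def
    using derived_algebra_lie_ideal[OF C(1)] derived_algebra_subset[OF lie_ideal_imp_subalgebra[OF C(1)]]
      derived_ne lie_ideal_imp_subalgebra
    by (intro subset_trans[OF _ span_superset]) blast
  then show ?thesis
    unfolding has_abelian_ideal_completion_def abelian_mod_def
    using completion bracket_mem_derived_algebra by blast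
qed

lemma engel_common_annihilated:
  assumes N: "ideal N"
    and "subalg K" and "N \<subseteq> K" and "\<forall>x\<in>K. \<forall>y. \<exists>m. (br x ^^ m) y \<in> N"
    and "subspace V" and "subspace W" and "N \<subseteq> W" and "W \<subset> V"
    and "\<forall>k\<in>K. \<forall>v\<in>V. br k v \<in> V" and "\<forall>k\<in>K. \<forall>w\<in>W. br k w \<in> W"
  shows "\<exists>v\<in>V. v \<notin> W \<and> (\<forall>k\<in>K. br k v \<in> W)"
  using assms(2-)
proof (induction "dim K" arbitrary: K V W rule: less_induct)
  case less
  note K = less.prems(1-3) and VW = less.prems(4-9)
  show ?case
  proof (cases "K \<subseteq> N")
    case True
    obtain v where "v \<in> V" "v \<notin> W"
      using VW(4) by blast
    moreover have "br k v \<in> W" if "k \<in> K" for k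
      using lie_ideal_bracket_left[OF N, of k v] True that VW(3) by blast
    ultimately show ?thesis by blast
  next
    case False
    obtain H where H: "subalg H" "N \<subseteq> H" "H \<subset> K"
      and maximal: "\<forall>T. subalg T \<and> H \<subset> T \<and> T \<subseteq> K \<longrightarrow> T = K"
    proof -
      have "N \<subset> K"
        using K(2) False by blast
      then show thesis
        using that exists_maximal_subalgebra_between[OF lie_ideal_imp_subalgebra[OF N] \<open>N \<subset> K\<close>] by auto
    qed
    have sK: "subspace K" and sH: "subspace H"
      using K(1) H(1) lie_subalgebra_subspace by blast+
    have dim_H: "dim H < dim K"
      using dim_strict_mono[OF sH sK H(3)] .
    have nil_H: "\<forall>x\<in>H. \<forall>y. \<exists>m. (br x ^^ m) y \<in> N"
      using K(3) H(3) by blast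
    have H_acts: "\<forall>k\<in>H. \<forall>v\<in>K. br k v \<in> K" "\<forall>k\<in>H. \<forall>v\<in>H. br k v \<in> H"
      using lie_subalgebra_bracket[OF K(1)] lie_subalgebra_bracket[OF H(1)] H(3) by blast+
    obtain v where v: "v \<in> K" "v \<notin> H" "\<forall>h\<in>H. br h v \<in> H"
      using less.hyps[OF dim_H H(1,2) nil_H sK sH H(2,3) H_acts] by blast
    have K_eq: "span (insert v H) = K"
    proof (rule maximal[rule_format, OF conjI[OF lie_subalgebra_insert[OF H(1) v(3)] conjI]])
      show "H \<subset> span (insert v H)"
        using v(2) span_superset[of "insert v H"] by blast
      show "span (insert v H) \<subseteq> K"
        using v(1) H(3) by (intro span_minimal[OF _ sK]) blast
    qed
    have VW_H: "\<forall>k\<in>H. \<forall>u\<in>V. br k u \<in> V" "\<forall>k\<in>H. \<forall>w\<in>W. br k w \<in> W"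
      using VW(5,6) H(3) by blast+
    obtain v0 where v0: "v0 \<in> V" "v0 \<notin> W" "\<forall>h\<in>H. br h v0 \<in> W"
      using less.hyps[OF dim_H H(1,2) nil_H VW(1-4) VW_H] by blast
    obtain m where "(br v ^^ m) v0 \<in> W"
      using K(3) v(1) VW(3) by blast
    then obtain u where u: "u \<in> V" "u \<notin> W" "\<forall>k\<in>insert v H. br k u \<in> W"
      using exists_annihilated_by_insert[OF VW(2) _ _ v(3) v0] VW(5,6) v(1) by blast
    have "br k u \<in> W" if "k \<in> K" for k
      using bracket_span_mem[OF VW(2), of "insert v H" "{u}" k u] u(3) that K_eq
      by (simp add: span_base)
    then show ?thesis
      using u(1,2) by blast
  qed
qed

end

locale nonabelian_chief_factor = fd_lie_alg +
  fixes N A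
  assumes ideal_N: "lie_ideal scl br N" and ideal_A: "lie_ideal scl br A"
    and N_psubset_A: "N \<subset> A"
    and chief: "\<And>J. lie_ideal scl br J \<Longrightarrow> N \<subseteq> J \<Longrightarrow> J \<subseteq> A \<Longrightarrow> J = N \<or> J = A"
    and nonabelian: "\<exists>a\<in>A. \<exists>b\<in>A. br a b \<notin> N"
begin

definition centralizer :: "'b set" where
  "centralizer = {z. \<forall>a\<in>A. br z a \<in> N}"

lemma subspace_N: "subspace N"
  using lie_ideal_subspace[OF ideal_N] .

lemma subspace_A: "subspace A"
  using lie_ideal_subspace[OF ideal_A] .

lemma chief_factor_subset_of_brackets:
  assumes "subspace M" and "N \<subseteq> M" and "\<forall>a\<in>A. \<forall>b\<in>A. br a b \<in> M"
  shows "A \<subseteq> M"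
proof -
  define G where "G = {br a b | a b. a \<in> A \<and> b \<in> A}"
  have "ideal (span (G \<union> N))"
  proof (rule lie_ideal_span, intro allI ballI)
    fix l g assume "g \<in> G \<union> N"
    then show "br l g \<in> span (G \<union> N)"
    proof
      assume "g \<in> G"
      then obtain a b where g: "g = br a b" "a \<in> A" "b \<in> A"
        unfolding G_def by blast
      then have "br (br l a) b \<in> G" "br a (br l b) \<in> G"
        unfolding G_def using lie_ideal_bracket_right[OF ideal_A] by blast+
      then show ?thesis
        unfolding g(1) bracket_leibniz[of l a b] by (blast intro: span_add span_base)
    next
      assume "g \<in> N"
      then show ?thesis
        using lie_ideal_bracket_right[OF ideal_N] by (blast intro: span_base)
    qed
  qed
  moreover have "span (G \<union> N) \<subseteq> A"
    unfolding G_def using lie_ideal_bracket_right[OF ideal_A] N_psubset_A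
    by (intro span_minimal subspace_A) blast
  moreover have "span (G \<union> N) \<noteq> N"
    using nonabelian span_superset[of "G \<union> N"] unfolding G_def by blast
  ultimately have "span (G \<union> N) = A"
    using chief[of "span (G \<union> N)"] span_superset[of "G \<union> N"] by blast
  moreover have "span (G \<union> N) \<subseteq> M"
    using assms unfolding G_def by (intro span_minimal) blast+
  ultimately show ?thesis by blast
qed

lemma centralizer_ideal: "ideal centralizer"
  unfolding lie_ideal_def
proof (intro conjI allI ballI)
  show "subspace centralizer"
    unfolding centralizer_def
    by (rule subspaceI) (simp_all add: subspace_0[OF subspace_N] subspace_add[OF subspace_N]
        subspace_scale[OF subspace_N])
  fix l z assume z: "z \<in> centralizer"
  have "br (br l z) a \<in> N" if a: "a \<in> A" for a
  proof -
    have "br l (br z a) \<in> N" "br z (br l a) \<in> N"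
      using z a lie_ideal_bracket_right[OF ideal_N] lie_ideal_bracket_right[OF ideal_A]
      unfolding centralizer_def by blast+
    then have "br l (br z a) - br z (br l a) \<in> N"
      by (rule subspace_diff[OF subspace_N])
    then show ?thesis
      unfolding bracket_leibniz[of l z a] by simp
  qed
  then show "br l z \<in> centralizer"
    unfolding centralizer_def by blast
qed

lemma centralizer_Int_eq: "centralizer \<inter> A = N"
proof -
  have "N \<subseteq> centralizer"
    unfolding centralizer_def using lie_ideal_bracket_left[OF ideal_N] by blast
  then have "centralizer \<inter> A = N \<or> centralizer \<inter> A = A"
    using chief[OF lie_ideal_Int[OF centralizer_ideal ideal_A]] N_psubset_A by blast
  moreover have "centralizer \<inter> A \<noteq> A"
    using nonabelian unfolding centralizer_def by blast
  ultimately show ?thesis by blast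
qed

lemma chief_factor_subset_of_abelian_mod:
  assumes "subspace M" and "centralizer \<subseteq> M"
    and "ideal C" and "\<not> C \<subseteq> M" and C_brackets: "\<forall>x\<in>C. \<forall>y\<in>C. br x y \<in> M"
  shows "A \<subseteq> M"
proof -
  have NM: "N \<subseteq> M"
    using centralizer_Int_eq assms(2) by blast
  have "ideal (span (C \<union> N))"
    using lie_ideal_bracket_right[OF assms(3)] lie_ideal_bracket_right[OF ideal_N]
    by (intro lie_ideal_span) (blast intro: span_base)
  then have "A \<inter> span (C \<union> N) = N \<or> A \<inter> span (C \<union> N) = A"
    using chief[OF lie_ideal_Int[OF ideal_A]] N_psubset_A span_superset[of "C \<union> N"] by blast
  then show ?thesis
  proof
    assume "A \<inter> span (C \<union> N) = N"
    then have "br c a \<in> N" if "c \<in> C" "a \<in> A" for c a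
      using that lie_ideal_bracket_right[OF ideal_A] lie_ideal_bracket_left[OF assms(3)]
        span_superset[of "C \<union> N"] by blast
    then have "C \<subseteq> centralizer"
      unfolding centralizer_def by blast
    then show ?thesis
      using assms(2,4) by blast
  next
    assume "A \<inter> span (C \<union> N) = A"
    moreover have "\<forall>x\<in>C \<union> N. \<forall>y\<in>C \<union> N. br x y \<in> M"
      using C_brackets NM lie_ideal_bracket_right[OF ideal_N] lie_ideal_bracket_left[OF ideal_N]
      by blast
    ultimately have "\<forall>a\<in>A. \<forall>b\<in>A. br a b \<in> M"
      using bracket_span_mem[OF assms(1)] by blast
    then show ?thesis
      using chief_factor_subset_of_brackets[OF assms(1) NM] by blast
  qed
qed

lemma supplement_eq_UNIV:
  assumes covered: "\<And>M. maximal_subalgebra scl br M \<Longrightarrow> centralizer \<subseteq> M \<Longrightarrow> A \<subseteq> M"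
    and "subalg S" and "centralizer \<subseteq> S" and supplement: "\<forall>y. \<exists>s\<in>S. \<exists>a\<in>A. y = s + a"
  shows "S = UNIV"
proof (rule ccontr)
  assume "S \<noteq> UNIV"
  then obtain M where M: "maximal_subalgebra scl br M" "S \<subseteq> M"
    using exists_maximal_subalgebra[OF assms(2)] by blast
  have "A \<subseteq> M"
    using covered[OF M(1)] assms(3) M(2) by blast
  have "subspace M"
    using M(1) lie_subalgebra_subspace unfolding maximal_subalgebra_def by blast
  have "y \<in> M" for y
  proof -
    obtain s a where "s \<in> S" "a \<in> A" "y = s + a"
      using supplement by blast
    then show ?thesis
      using subspace_add[OF \<open>subspace M\<close>] \<open>A \<subseteq> M\<close> M(2) by blast
  qed
  then show False
    using M(1) unfolding maximal_subalgebra_def by blast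
qed

lemma ad_nilpotent_mod_N:
  assumes covered: "\<And>M. maximal_subalgebra scl br M \<Longrightarrow> centralizer \<subseteq> M \<Longrightarrow> A \<subseteq> M"
    and x: "x \<in> A"
  shows "\<exists>m. (br x ^^ m) y \<in> N"
proof -
  define K where "K = {k. \<exists>m. (br x ^^ m) k = 0}"
  have sK: "subspace K" and sZ: "subspace centralizer"
    unfolding K_def using lie_subalgebra_subspace[OF lie_subalgebra_generalized_null_space]
      lie_ideal_subspace[OF centralizer_ideal] by blast+
  obtain n where "n > 0" and fitting: "\<forall>y. \<exists>w. (br x ^^ n) (y - (br x ^^ n) w) = 0"
    using fitting_decomposition[OF linear_bracket_right] by blast
  then obtain n' where n': "n = Suc n'"
    using gr0_implies_Suc by blast
  have supplement: "\<forall>y. \<exists>s\<in>span (K \<union> centralizer). \<exists>a\<in>A. y = s + a"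
  proof
    fix y
    obtain w where "(br x ^^ n) (y - (br x ^^ n) w) = 0"
      using fitting by blast
    then have "y - (br x ^^ n) w \<in> span (K \<union> centralizer)"
      unfolding K_def by (blast intro: span_base)
    moreover have "(br x ^^ n) w \<in> A"
      unfolding n' using lie_ideal_bracket_left[OF ideal_A x] by simp
    ultimately show "\<exists>s\<in>span (K \<union> centralizer). \<exists>a\<in>A. y = s + a"
      by (metis diff_add_cancel)
  qed
  have "centralizer \<subseteq> span (K \<union> centralizer)"
    by (meson Un_upper2 span_superset subset_trans)
  then have "span (K \<union> centralizer) = UNIV"
    using supplement_eq_UNIV[OF covered _ _ supplement] K_def
      lie_subalgebra_add_ideal[OF lie_subalgebra_generalized_null_space centralizer_ideal] by blast
  then obtain k z where y: "y = k + z" and "k \<in> K" and z: "z \<in> centralizer"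
    unfolding span_Un span_eq_iff[THEN iffD2, OF sK] span_eq_iff[THEN iffD2, OF sZ] by blast
  then obtain m where "(br x ^^ m) k = 0"
    unfolding K_def by blast
  then have k: "(br x ^^ Suc m) k = 0"
    by simp
  have "(br x ^^ Suc m) z \<in> centralizer"
    by (rule ad_power_mem_ideal[OF centralizer_ideal z])
  moreover have "(br x ^^ Suc m) z \<in> A"
    using lie_ideal_bracket_left[OF ideal_A x] by simp
  ultimately have "(br x ^^ Suc m) z \<in> N"
    using centralizer_Int_eq by blast
  then have "(br x ^^ Suc m) y \<in> N"
    unfolding y ad_power_add k by simp
  then show ?thesis ..
qed

lemma not_all_abelian_ideal_completions:
  assumes "\<forall>M. maximal_subalgebra scl br M \<longrightarrow> has_abelian_ideal_completion scl br M"
  shows False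
proof -
  have covered: "A \<subseteq> M" if M: "maximal_subalgebra scl br M" "centralizer \<subseteq> M" for M
  proof -
    have "subspace M"
      using M(1) lie_subalgebra_subspace unfolding maximal_subalgebra_def by blast
    obtain C where "ideal C" "\<not> C \<subseteq> M" "\<forall>x\<in>C. \<forall>y\<in>C. br x y \<in> M"
      by (rule abelian_ideal_completion_brackets[OF \<open>subspace M\<close> assms[rule_format, OF M(1)]])
    then show ?thesis
      by (rule chief_factor_subset_of_abelian_mod[OF \<open>subspace M\<close> M(2)])
  qed
  have nil: "\<forall>x\<in>A. \<forall>y. \<exists>m. (br x ^^ m) y \<in> N"
    using ad_nilpotent_mod_N[OF covered] by blast
  have A_acts: "\<forall>k\<in>A. \<forall>v\<in>A. br k v \<in> A" "\<forall>k\<in>A. \<forall>w\<in>N. br k w \<in> N"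
    using lie_ideal_bracket_right[OF ideal_A] lie_ideal_bracket_right[OF ideal_N] by blast+
  obtain v where v: "v \<in> A" "v \<notin> N" "\<forall>k\<in>A. br k v \<in> N"
    using engel_common_annihilated[OF ideal_N lie_ideal_imp_subalgebra[OF ideal_A] psubset_imp_subset[OF N_psubset_A]
        nil subspace_A subspace_N order.refl N_psubset_A A_acts] by blast
  have "br v k \<in> N" if "k \<in> A" for k
    using v(3) that subspace_neg[OF subspace_N] bracket_antisym[of v k] by simp
  then have "v \<in> centralizer \<inter> A"
    unfolding centralizer_def using v(1) by blast
  then show False
    using centralizer_Int_eq v(2) by blast
qed

end

context fd_lie_alg
begin

lemma exists_nonabelian_chief_factor:
  assumes "\<not> lie_solvable scl br"
  shows "\<exists>N A. nonabelian_chief_factor scl br Basis N A"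
proof -
  obtain N where N: "ideal N" "lie_solvable_on scl br N"
    and greatest: "\<forall>T. ideal T \<and> lie_solvable_on scl br T \<longrightarrow> dim T \<le> dim N"
    using ex_dim_maximal[of "\<lambda>T. ideal T \<and> lie_solvable_on scl br T" "{0}"] lie_ideal_zero
    unfolding lie_solvable_on_def by (metis derived_series_of.simps(1))
  have "N \<noteq> UNIV"
    using N(2) assms unfolding lie_solvable_on_def lie_solvable_def by (metis derived_series_eq)
  then obtain A where A: "ideal A" "N \<subset> A"
    and least: "\<forall>T. ideal T \<and> N \<subset> T \<longrightarrow> dim A \<le> dim T"
    using ex_has_least_nat[of "\<lambda>T. ideal T \<and> N \<subset> T" UNIV dim] lie_ideal_UNIV by blast
  have sN: "subspace N" and sA: "subspace A"
    using N(1) A(1) lie_ideal_subspace by blast+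
  have "J = N \<or> J = A" if "ideal J" "N \<subseteq> J" "J \<subseteq> A" for J
    using least that subspace_dim_equal[of J A] lie_ideal_subspace sA by blast
  moreover have "\<exists>a\<in>A. \<exists>b\<in>A. br a b \<notin> N"
  proof (rule ccontr)
    assume "\<not> ?thesis"
    then have "derived_algebra scl br A \<subseteq> N"
      unfolding derived_algebra_def by (intro span_minimal[OF _ sN]) blast
    then have "dim A \<le> dim N"
      using greatest A(1) lie_solvable_on_extension[OF N(2)] by blast
    then show False
      using dim_strict_mono[OF sN sA A(2)] by simp
  qed
  ultimately have "nonabelian_chief_factor scl br Basis N A"
    using N(1) A by unfold_locales blast+
  then show ?thesis by blast
qed

lemma abelian_ideal_completions_imp_solvable:
  assumes "\<forall>M. maximal_subalgebra scl br M \<longrightarrow> has_abelian_ideal_completion scl br M"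
  shows "lie_solvable scl br"
proof (rule ccontr)
  assume "\<not> lie_solvable scl br"
  then obtain N A where "nonabelian_chief_factor scl br Basis N A"
    using exists_nonabelian_chief_factor by blast
  then show False
    using nonabelian_chief_factor.not_all_abelian_ideal_completions assms by blast
qed

end

lemma fd_lie_alg_exists:
  assumes "lie_algebra scl br" and "finite_dim_lie scl"
  shows "\<exists>Basis. fd_lie_alg scl br Basis"
proof -
  interpret lie_alg scl br
    using assms(1) by unfold_locales
  obtain B0 where "finite B0" "span B0 = UNIV"
    using assms(2) unfolding finite_dim_lie_def by blast
  moreover obtain B where "independent B" "UNIV \<subseteq> span B"
    using basis_exists[of UNIV] by blast
  ultimately have "finite_dimensional_vector_space scl B"
    using independent_span_bound[of B0 B]
    by unfold_locales auto
  then show ?thesis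
    using assms(1) unfolding fd_lie_alg_def lie_alg_def by blast
qed

theorem theorem2p10:
  fixes scl :: "'a::field \<Rightarrow> 'b::ab_group_add \<Rightarrow> 'b" and br :: "'b \<Rightarrow> 'b \<Rightarrow> 'b"
  assumes "lie_algebra scl br" and "finite_dim_lie scl"
  shows "lie_solvable scl br \<longleftrightarrow>
    (\<forall>M. maximal_subalgebra scl br M \<longrightarrow> has_abelian_ideal_completion scl br M)"
proof -
  obtain Basis where "fd_lie_alg scl br Basis"
    using fd_lie_alg_exists[OF assms] by blast
  then interpret fd_lie_alg scl br Basis .
  show ?thesis
    using solvable_imp_abelian_ideal_completion abelian_ideal_completions_imp_solvable by blast
qed

end
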